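(* Let $\mathcal{I}$ be a finite set of items, $u$ a user with real-valued preference scores $s_{ui}$ for $i \in \mathcal{I}$, and $\mathcal{P}_u \subseteq \mathcal{I}$ the set of positive items of $u$. Let $K \ge 1$ be an integer and $\tau_w, \tau_d > 0$. Define the ranking position $\pi_{ui} = \sum_{j \in \mathcal{I}} \mathbb{I}(s_{uj} \ge s_{ui})$, $$\mathrm{DCG}@K(u) = \sum_{i \in \mathcal{P}_u} \frac{\mathbb{I}(\pi_{ui} \le K)}{\log_2(\pi_{ui}+1)},$$ the Top-$K$ quantile $\beta_u^K = \inf\{ s_{ui} : i \in \mathcal{I},\ \pi_{ui} \le K\}$, the number of Top-$K$ hits $H_u^K = \sum_{i \in \mathcal{P}_u} \mathbb{I}(s_{ui} \ge \beta_u^K)$, and the loss $$\mathcal{L}_{\mathrm{SL@}K}(u) = \sum_{i \in \mathcal{P}_u} \sigma_w(s_{ui} - \beta_u^K)\cdot \log\Big( \sum_{j \in \mathcal{I}} \exp\big((s_{uj} - s_{ui})/\tau_d\big)\Big),$$ where $\sigma_w(x) = 1/(1 + \exp(-x/\tau_w))$. If $H_u^K > 1$, then $-\log \mathrm{DCG}@K(u) \le \mathcal{L}_{\mathrm{SL@}K}(u)$. If $H_u^K = 1$, then $-\frac{1}{2}\log \mathrm{DCG}@K(u) \le \mathcal{L}_{\mathrm{SL@}K}(u)$.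
   Context: $\mathbb{I}(\cdot)$ is the indicator function and $\log$ denotes the natural logarithm. $\mathcal{L}_{\mathrm{SL@}K}$ is called SoftmaxLoss@$K$ in the paper. *)

theory Defs
  imports "HOL-Analysis.Analysis"
begin

definition rank_pos :: "'a set \<Rightarrow> ('a \<Rightarrow> real) \<Rightarrow> 'a \<Rightarrow> nat" where
  "rank_pos I s i = card {j \<in> I. s j \<ge> s i}"

definition DCG_at :: "'a set \<Rightarrow> 'a set \<Rightarrow> ('a \<Rightarrow> real) \<Rightarrow> nat \<Rightarrow> real" where
  "DCG_at I P s K =
     (\<Sum>i\<in>P. (if rank_pos I s i \<le> K then 1 else 0) / log 2 (real (rank_pos I s i) + 1))"

text \<open>Top-K quantile, as an infimum in the extended reals (Inf of the empty set is +infinity).\<close>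
definition topK_quantile :: "'a set \<Rightarrow> ('a \<Rightarrow> real) \<Rightarrow> nat \<Rightarrow> ereal" where
  "topK_quantile I s K = Inf {ereal (s i) | i. i \<in> I \<and> rank_pos I s i \<le> K}"

definition topK_hits :: "'a set \<Rightarrow> 'a set \<Rightarrow> ('a \<Rightarrow> real) \<Rightarrow> nat \<Rightarrow> nat" where
  "topK_hits I P s K = card {i \<in> P. ereal (s i) \<ge> topK_quantile I s K}"

definition sigma_w :: "real \<Rightarrow> real \<Rightarrow> real" where
  "sigma_w tw x = 1 / (1 + exp (- x / tw))"

definition softmax_loss_at :: "'a set \<Rightarrow> 'a set \<Rightarrow> ('a \<Rightarrow> real) \<Rightarrow> nat \<Rightarrow> real \<Rightarrow> real \<Rightarrow> real" where
  "softmax_loss_at I P s K tw td =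
     (\<Sum>i\<in>P. sigma_w tw (s i - real_of_ereal (topK_quantile I s K)) *
              ln (\<Sum>j\<in>I. exp ((s j - s i) / td)))"

end

theory Submission
  imports Defs
begin

text \<open>Every Top-\<open>K\<close> hit \<open>i\<close> has rank \<open>\<pi> \<le> K\<close>, so it contributes at least
  \<open>1 / log\<^sub>2 (\<pi> + 1) \<ge> 1 / \<pi>\<close> to DCG@K, i.e. \<open>- ln DCG \<le> ln \<pi>\<close>. On the other hand
  \<open>\<pi>\<close> counts the items scored at least \<open>s i\<close>, each contributing at least \<open>1\<close> to the
  softmax denominator, so \<open>ln \<pi>\<close> is bounded by the log-softmax factor of \<open>i\<close>; its weight
  \<open>\<sigma>\<^sub>w\<close> is at least \<open>1/2\<close> because \<open>s i \<ge> \<beta>\<close>. All summands of the loss being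
  nonnegative, one hit gives half of \<open>- ln DCG\<close> and two hits give all of it.\<close>

lemma rank_pos_pos:
  assumes "finite I" "i \<in> I"
  shows "0 < rank_pos I s i"
  using assms unfolding rank_pos_def by (auto simp: card_gt_0_iff)

lemma rank_pos_antimono:
  assumes "finite I" "s k \<le> s i"
  shows "rank_pos I s i \<le> rank_pos I s k"
  unfolding rank_pos_def using assms by (intro card_mono) auto

lemma rank_pos_le_sum_exp:
  assumes "finite I" "0 \<le> td"
  shows "real (rank_pos I s i) \<le> (\<Sum>j\<in>I. exp ((s j - s i) / td))"
proof -
  let ?A = "{j \<in> I. s j \<ge> s i}"
  have "real (rank_pos I s i) = (\<Sum>j\<in>?A. 1)"
    unfolding rank_pos_def by simp
  also have "\<dots> \<le> (\<Sum>j\<in>?A. exp ((s j - s i) / td))"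
    using assms by (intro sum_mono) auto
  also have "\<dots> \<le> (\<Sum>j\<in>I. exp ((s j - s i) / td))"
    using assms by (intro sum_mono2) auto
  finally show ?thesis .
qed

lemma ln_rank_pos_le_ln_sum_exp:
  assumes "finite I" "i \<in> I" "0 \<le> td"
  shows "ln (real (rank_pos I s i)) \<le> ln (\<Sum>j\<in>I. exp ((s j - s i) / td))"
  using rank_pos_pos[OF assms(1,2), of s]
  by (intro ln_mono rank_pos_le_sum_exp[OF assms(1,3)]) simp

lemma ln_sum_exp_nonneg:
  fixes s :: "'a \<Rightarrow> real"
  assumes "finite I" "i \<in> I" "0 \<le> td"
  shows "0 \<le> ln (\<Sum>j\<in>I. exp ((s j - s i) / td))"
proof -
  have "0 \<le> ln (real (rank_pos I s i))"
    using rank_pos_pos[OF assms(1,2), of s] by simp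
  then show ?thesis
    using ln_rank_pos_le_ln_sum_exp[OF assms, of s] by linarith
qed

lemma log2_Suc_le:
  fixes n :: nat
  shows "log 2 (real n + 1) \<le> real n"
proof -
  have "1 + real n * 1 \<le> (1 + 1) ^ n"
    by (rule Bernoulli_inequality) simp
  then have "real n + 1 \<le> 2 powr real n"
    by (simp add: powr_realpow)
  then show ?thesis
    by (simp add: log_le_iff)
qed

lemma topK_quantile_attained:
  assumes "finite I" "topK_quantile I s K \<noteq> \<infinity>"
  obtains k where "k \<in> I" "rank_pos I s k \<le> K" "topK_quantile I s K = ereal (s k)"
proof -
  let ?S = "{ereal (s i) | i. i \<in> I \<and> rank_pos I s i \<le> K}"
  have "?S = (\<lambda>i. ereal (s i)) ` {i \<in> I. rank_pos I s i \<le> K}"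
    by auto
  then have S_finite: "finite ?S"
    using assms(1) by simp
  have S_nonempty: "?S \<noteq> {}"
  proof
    assume "?S = {}"
    then have "topK_quantile I s K = \<infinity>"
      unfolding topK_quantile_def by (simp only: Inf_empty top_ereal_def)
    with assms(2) show False ..
  qed
  have "topK_quantile I s K = Min ?S"
    unfolding topK_quantile_def using S_finite S_nonempty by (rule cInf_eq_Min)
  moreover have "Min ?S \<in> ?S"
    using S_finite S_nonempty by (rule Min_in)
  ultimately show ?thesis
    using that by auto
qed

lemma topK_hit_rank_pos_le:
  assumes "finite I" "topK_quantile I s K \<le> ereal (s i)"
  shows "rank_pos I s i \<le> K"
proof -
  have "topK_quantile I s K \<noteq> \<infinity>"
    using assms(2) by auto
  then obtain k where "rank_pos I s k \<le> K" "topK_quantile I s K = ereal (s k)"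
    using topK_quantile_attained[OF assms(1)] by blast
  with assms show ?thesis
    using rank_pos_antimono[of I s k i] by simp
qed

lemma sigma_w_pos: "0 < sigma_w tw x"
  unfolding sigma_w_def by (simp add: add_pos_pos)

lemma sigma_w_ge_half:
  assumes "0 < tw" "0 \<le> x"
  shows "1/2 \<le> sigma_w tw x"
proof -
  have "exp (- x / tw) \<le> 1"
    using assms by (simp add: divide_nonpos_pos)
  then show ?thesis
    unfolding sigma_w_def by (simp add: field_simps add_pos_pos)
qed

lemma topK_hit_sigma_w_ge_half:
  assumes "finite I" "0 < tw" "topK_quantile I s K \<le> ereal (s i)"
  shows "1/2 \<le> sigma_w tw (s i - real_of_ereal (topK_quantile I s K))"
proof -
  have "topK_quantile I s K \<noteq> \<infinity>"
    using assms(3) by auto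
  then obtain k where "topK_quantile I s K = ereal (s k)"
    using topK_quantile_attained[OF assms(1)] by blast
  with assms show ?thesis
    by (intro sigma_w_ge_half) auto
qed

lemma neg_ln_DCG_at_le_ln_rank_pos:
  assumes "finite I" "P \<subseteq> I" "i \<in> P" "rank_pos I s i \<le> K"
  shows "- ln (DCG_at I P s K) \<le> ln (real (rank_pos I s i))"
proof -
  let ?r = "real (rank_pos I s i)"
  have "i \<in> I"
    using assms by auto
  then have "0 < ?r"
    using rank_pos_pos assms(1) by simp
  then have log_pos: "0 < log 2 (?r + 1)"
    by simp
  have "1 / log 2 (?r + 1) = (if rank_pos I s i \<le> K then 1 else 0) / log 2 (?r + 1)"
    using assms(4) by simp
  also have "\<dots> \<le> DCG_at I P s K"
    unfolding DCG_at_def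
    by (rule member_le_sum) (use assms finite_subset in auto)
  finally have "ln (1 / log 2 (?r + 1)) \<le> ln (DCG_at I P s K)"
    using log_pos by (intro ln_mono) auto
  then have "- ln (DCG_at I P s K) \<le> - ln (1 / log 2 (?r + 1))"
    by simp
  also have "\<dots> = ln (log 2 (?r + 1))"
    using log_pos by (simp add: ln_div)
  also have "\<dots> \<le> ln ?r"
    using log2_Suc_le log_pos by simp
  finally show ?thesis .
qed

definition softmax_loss_term :: "'a set \<Rightarrow> ('a \<Rightarrow> real) \<Rightarrow> nat \<Rightarrow> real \<Rightarrow> real \<Rightarrow> 'a \<Rightarrow> real" where
  "softmax_loss_term I s K tw td i =
     sigma_w tw (s i - real_of_ereal (topK_quantile I s K)) * ln (\<Sum>j\<in>I. exp ((s j - s i) / td))"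

lemma softmax_loss_term_nonneg:
  assumes "finite I" "i \<in> I" "0 \<le> td"
  shows "0 \<le> softmax_loss_term I s K tw td i"
  unfolding softmax_loss_term_def
  by (intro mult_nonneg_nonneg less_imp_le[OF sigma_w_pos] ln_sum_exp_nonneg assms)

lemma topK_hit_softmax_loss_term_ge:
  assumes "finite I" "P \<subseteq> I" "i \<in> P" "0 < tw" "0 \<le> td"
    and "topK_quantile I s K \<le> ereal (s i)"
  shows "- ln (DCG_at I P s K) / 2 \<le> softmax_loss_term I s K tw td i"
proof -
  let ?L = "ln (\<Sum>j\<in>I. exp ((s j - s i) / td))"
  let ?\<sigma> = "sigma_w tw (s i - real_of_ereal (topK_quantile I s K))"
  have "i \<in> I"
    using assms by auto
  have "- ln (DCG_at I P s K) \<le> ln (real (rank_pos I s i))"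
    using neg_ln_DCG_at_le_ln_rank_pos[OF assms(1-3)] topK_hit_rank_pos_le[OF assms(1,6)] .
  also have "\<dots> \<le> ?L"
    using ln_rank_pos_le_ln_sum_exp[OF assms(1) \<open>i \<in> I\<close> assms(5)] .
  finally have "- ln (DCG_at I P s K) / 2 \<le> 1/2 * ?L"
    by simp
  also have "\<dots> \<le> ?\<sigma> * ?L"
  proof (rule mult_right_mono)
    show "1/2 \<le> ?\<sigma>"
      using topK_hit_sigma_w_ge_half[OF assms(1,4,6)] .
    show "0 \<le> ?L"
      using ln_sum_exp_nonneg[OF assms(1) \<open>i \<in> I\<close> assms(5)] .
  qed
  finally show ?thesis
    unfolding softmax_loss_term_def .
qed

lemma sum_softmax_loss_term_le:
  assumes "finite I" "P \<subseteq> I" "A \<subseteq> P" "0 \<le> td"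
  shows "(\<Sum>i\<in>A. softmax_loss_term I s K tw td i) \<le> softmax_loss_at I P s K tw td"
  unfolding softmax_loss_at_def softmax_loss_term_def[symmetric]
  by (intro sum_mono2 softmax_loss_term_nonneg) (use assms finite_subset in auto)

theorem theorem3p2:
  fixes I P :: "'a set" and s :: "'a \<Rightarrow> real" and K :: nat and tw td :: real
  assumes "finite I" and "P \<subseteq> I" and "K \<ge> 1" and "tw > 0" and "td > 0"
  shows "(topK_hits I P s K > 1 \<longrightarrow> - ln (DCG_at I P s K) \<le> softmax_loss_at I P s K tw td)
       \<and> (topK_hits I P s K = 1 \<longrightarrow> - (1/2) * ln (DCG_at I P s K) \<le> softmax_loss_at I P s K tw td)"
proof -
  define hits where "hits = {i \<in> P. topK_quantile I s K \<le> ereal (s i)}"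
  let ?t = "softmax_loss_term I s K tw td"
  have finite_hits: "finite hits"
    using finite_subset[OF assms(2,1)] unfolding hits_def by simp
  have card_hits: "topK_hits I P s K = card hits"
    unfolding topK_hits_def hits_def ..
  have hit_ge: "- ln (DCG_at I P s K) / 2 \<le> ?t i" if "i \<in> hits" for i
    using that unfolding hits_def
    by (intro topK_hit_softmax_loss_term_ge) (use assms in auto)
  have le_loss: "sum ?t A \<le> softmax_loss_at I P s K tw td" if "A \<subseteq> hits" for A
    using that unfolding hits_def
    by (intro sum_softmax_loss_term_le) (use assms in auto)
  show ?thesis
  proof (intro conjI impI)
    assume "topK_hits I P s K > 1"
    then have "\<not> (\<forall>a\<in>hits. \<forall>b\<in>hits. a = b)"
      using card_hits card_le_Suc0_iff_eq[OF finite_hits] by simp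
    then obtain a b where "a \<in> hits" "b \<in> hits" "a \<noteq> b"
      by blast
    then have "?t a + ?t b \<le> softmax_loss_at I P s K tw td"
      using le_loss[of "{a, b}"] by simp
    then show "- ln (DCG_at I P s K) \<le> softmax_loss_at I P s K tw td"
      using hit_ge[OF \<open>a \<in> hits\<close>] hit_ge[OF \<open>b \<in> hits\<close>] by linarith
  next
    assume "topK_hits I P s K = 1"
    then have "card hits = 1"
      using card_hits by simp
    then obtain a where "hits = {a}"
      by (rule card_1_singletonE)
    then have "?t a \<le> softmax_loss_at I P s K tw td"
      using le_loss[of "{a}"] by simp
    then show "- (1/2) * ln (DCG_at I P s K) \<le> softmax_loss_at I P s K tw td"
      using hit_ge[of a] \<open>hits = {a}\<close> by simp
  qed
qed

end
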